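(* Let $\mathsf{K}$ be a variety, $\mathbf{B}\in\mathsf{K}$, and $\mathbf{A}\leq\mathbf{B}$ fully epic in $\mathsf{K}$. For all congruences $\theta_1,\theta_2$ of $\mathbf{B}$, \[(\theta_1+^{\mathbf{B}}\theta_2){\upharpoonright}_A=\theta_1{\upharpoonright}_A+^{\mathbf{A}}\theta_2{\upharpoonright}_A.\]
   Context: For an algebra $\mathbf{C}$, $+^{\mathbf{C}}$ denotes the join in the congruence lattice of $\mathbf{C}$; $\theta{\upharpoonright}_A=\theta\cap(A\times A)$. $\mathbf{A}\leq\mathbf{B}$ is epic in $\mathsf{K}$ if for all $\mathbf{C}\in\mathsf{K}$ and homomorphisms $g,h\colon\mathbf{B}\to\mathbf{C}$, $g{\upharpoonright}_A=h{\upharpoonright}_A$ implies $g=h$; it is full in $\mathsf{K}$ if it is proper, almost total ($B=\mathrm{Sg}^{\mathbf{B}}(A\cup\{b\})$ for some $b$), and every congruence $\theta\neq\mathrm{id}_B$ of $\mathbf{B}$ relates each $b\in B$ to some $a\in A$; fully epic means full and epic. *)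

theory Defs
  imports Main
begin

type_synonym ('f, 'a) alg = "'a set \<times> ('f \<Rightarrow> 'a list \<Rightarrow> 'a)"

definition is_algebra :: "('f \<Rightarrow> nat) \<Rightarrow> ('f, 'a) alg \<Rightarrow> bool" where
  "is_algebra ar Alg \<longleftrightarrow> fst Alg \<noteq> {} \<and>
     (\<forall>f xs. length xs = ar f \<and> set xs \<subseteq> fst Alg \<longrightarrow> snd Alg f xs \<in> fst Alg)"

datatype ('f, 'v) trm = Var 'v | App 'f "('f, 'v) trm list"

fun wf_trm :: "('f \<Rightarrow> nat) \<Rightarrow> ('f, 'v) trm \<Rightarrow> bool" where
  "wf_trm ar (Var v) = True"
| "wf_trm ar (App f ts) = (length ts = ar f \<and> (\<forall>t\<in>set ts. wf_trm ar t))"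

fun eval_trm :: "('f \<Rightarrow> 'a list \<Rightarrow> 'a) \<Rightarrow> ('v \<Rightarrow> 'a) \<Rightarrow> ('f, 'v) trm \<Rightarrow> 'a" where
  "eval_trm F \<sigma> (Var v) = \<sigma> v"
| "eval_trm F \<sigma> (App f ts) = F f (map (eval_trm F \<sigma>) ts)"

definition in_variety ::
  "('f \<Rightarrow> nat) \<Rightarrow> (('f, nat) trm \<times> ('f, nat) trm) set \<Rightarrow> ('f, 'a) alg \<Rightarrow> bool" where
  "in_variety ar Eqs Alg \<longleftrightarrow> is_algebra ar Alg \<and>
     (\<forall>(s, t)\<in>Eqs. wf_trm ar s \<and> wf_trm ar t \<longrightarrow>
        (\<forall>\<sigma>. range \<sigma> \<subseteq> fst Alg \<longrightarrow> eval_trm (snd Alg) \<sigma> s = eval_trm (snd Alg) \<sigma> t))"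

definition is_subalgebra :: "('f \<Rightarrow> nat) \<Rightarrow> 'a set \<Rightarrow> ('f, 'a) alg \<Rightarrow> bool" where
  "is_subalgebra ar A B \<longleftrightarrow> A \<subseteq> fst B \<and> is_algebra ar (A, snd B)"

definition Sg :: "('f \<Rightarrow> nat) \<Rightarrow> ('f, 'a) alg \<Rightarrow> 'a set \<Rightarrow> 'a set" where
  "Sg ar B X = \<Inter>{S. X \<subseteq> S \<and> S \<subseteq> fst B \<and>
      (\<forall>f xs. length xs = ar f \<and> set xs \<subseteq> S \<longrightarrow> snd B f xs \<in> S)}"

definition congruence :: "('f \<Rightarrow> nat) \<Rightarrow> ('f, 'a) alg \<Rightarrow> 'a rel \<Rightarrow> bool" where
  "congruence ar B \<theta> \<longleftrightarrow> equiv (fst B) \<theta> \<and>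
     (\<forall>f xs ys. length xs = ar f \<and> list_all2 (\<lambda>x y. (x, y) \<in> \<theta>) xs ys \<longrightarrow>
        (snd B f xs, snd B f ys) \<in> \<theta>)"

definition cong_join :: "('f \<Rightarrow> nat) \<Rightarrow> ('f, 'a) alg \<Rightarrow> 'a rel \<Rightarrow> 'a rel \<Rightarrow> 'a rel" where
  "cong_join ar B \<theta>1 \<theta>2 = \<Inter>{\<psi>. congruence ar B \<psi> \<and> \<theta>1 \<union> \<theta>2 \<subseteq> \<psi>}"

definition restr :: "'a rel \<Rightarrow> 'a set \<Rightarrow> 'a rel" where
  "restr \<theta> A = \<theta> \<inter> (A \<times> A)"

definition is_hom :: "('f \<Rightarrow> nat) \<Rightarrow> ('a \<Rightarrow> 'c) \<Rightarrow> ('f, 'a) alg \<Rightarrow> ('f, 'c) alg \<Rightarrow> bool" where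
  "is_hom ar h B C \<longleftrightarrow> h ` fst B \<subseteq> fst C \<and>
     (\<forall>f xs. length xs = ar f \<and> set xs \<subseteq> fst B \<longrightarrow> h (snd B f xs) = snd C f (map h xs))"

text \<open>The target algebras C range over algebras in K whose carrier lies in
the type of terms over 'b \<times> bool; this type is large enough to contain an isomorphic
copy of the subalgebra of any C generated by g(B) \<union> h(B), so (K being closed under
subalgebras and isomorphic copies) this is equivalent to quantifying over all C in K.\<close>

definition epic_in ::
  "('f \<Rightarrow> nat) \<Rightarrow> (('f, nat) trm \<times> ('f, nat) trm) set \<Rightarrow> 'b set \<Rightarrow> ('f, 'b) alg \<Rightarrow> bool" where
  "epic_in ar Eqs A B \<longleftrightarrow>
     (\<forall>(C :: ('f, ('f, 'b \<times> bool) trm) alg) g h.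
        in_variety ar Eqs C \<and> is_hom ar g B C \<and> is_hom ar h B C \<and> (\<forall>a\<in>A. g a = h a)
        \<longrightarrow> (\<forall>b\<in>fst B. g b = h b))"

definition full_in :: "('f \<Rightarrow> nat) \<Rightarrow> 'b set \<Rightarrow> ('f, 'b) alg \<Rightarrow> bool" where
  "full_in ar A B \<longleftrightarrow> A \<subset> fst B \<and>
     (\<exists>b\<in>fst B. fst B = Sg ar B (A \<union> {b})) \<and>
     (\<forall>\<theta>. congruence ar B \<theta> \<and> \<theta> \<noteq> Id_on (fst B) \<longrightarrow>
        (\<forall>b\<in>fst B. \<exists>a\<in>A. (b, a) \<in> \<theta>))"

definition fully_epic_in ::
  "('f \<Rightarrow> nat) \<Rightarrow> (('f, nat) trm \<times> ('f, nat) trm) set \<Rightarrow> 'b set \<Rightarrow> ('f, 'b) alg \<Rightarrow> bool" where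
  "fully_epic_in ar Eqs A B \<longleftrightarrow> full_in ar A B \<and> epic_in ar Eqs A B"

end

theory Submission
  imports Defs
begin

text \<open>
  Write \<phi> for the join of the restrictions \<theta>1|A and \<theta>2|A in the congruence lattice of A.
  The inclusion of \<phi> in (\<theta>1 + \<theta>2)|A holds for every subalgebra. For the converse we may
  assume that neither \<theta>i is the identity, so by fullness A meets every \<theta>i-class. Then
  b \<mapsto> [a]\<phi>, for any a \<in> A with (b, a) \<in> \<theta>i, is a well-defined homomorphism gi from B
  into A/\<phi> which restricts to the quotient map on A. Since A/\<phi> lies in the variety,
  epicness gives g1 = g2; hence the kernel of g1 contains \<theta>1 and \<theta>2, thus their join,
  and its restriction to A is \<phi>.
\<close>

lemma list_all2_set_subset:
  "list_all2 (\<lambda>x y. (x, y) \<in> R) xs ys \<Longrightarrow> R \<subseteq> S \<times> S \<Longrightarrow> set xs \<subseteq> S \<and> set ys \<subseteq> S"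
  by (induction rule: list_all2_induct) auto

lemma is_algebra_closed:
  "is_algebra ar X \<Longrightarrow> length xs = ar f \<Longrightarrow> set xs \<subseteq> fst X \<Longrightarrow> snd X f xs \<in> fst X"
  unfolding is_algebra_def by blast

lemma in_variety_is_algebra: "in_variety ar Eqs X \<Longrightarrow> is_algebra ar X"
  unfolding in_variety_def by blast

lemma is_subalgebra_subset: "is_subalgebra ar A B \<Longrightarrow> A \<subseteq> fst B"
  and is_subalgebra_is_algebra: "is_subalgebra ar A B \<Longrightarrow> is_algebra ar (A, snd B)"
  unfolding is_subalgebra_def by blast+

lemma in_varietyI:
  assumes "is_algebra ar X"
    and "\<And>s t \<sigma>. (s, t) \<in> Eqs \<Longrightarrow> wf_trm ar s \<Longrightarrow> wf_trm ar t \<Longrightarrow> range \<sigma> \<subseteq> fst X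
           \<Longrightarrow> eval_trm (snd X) \<sigma> s = eval_trm (snd X) \<sigma> t"
  shows "in_variety ar Eqs X"
  using assms unfolding in_variety_def by auto

lemma in_varietyD:
  "in_variety ar Eqs X \<Longrightarrow> (s, t) \<in> Eqs \<Longrightarrow> wf_trm ar s \<Longrightarrow> wf_trm ar t \<Longrightarrow> range \<sigma> \<subseteq> fst X
   \<Longrightarrow> eval_trm (snd X) \<sigma> s = eval_trm (snd X) \<sigma> t"
  unfolding in_variety_def by blast

lemma in_variety_subalgebra:
  assumes "in_variety ar Eqs B" and "is_subalgebra ar A B"
  shows "in_variety ar Eqs (A, snd B)"
proof (rule in_varietyI)
  show "is_algebra ar (A, snd B)"
    using assms(2) by (rule is_subalgebra_is_algebra)
  fix s t and \<sigma> :: "nat \<Rightarrow> _"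
  assume "(s, t) \<in> Eqs" "wf_trm ar s" "wf_trm ar t" "range \<sigma> \<subseteq> fst (A, snd B)"
  moreover have "A \<subseteq> fst B"
    using assms(2) by (rule is_subalgebra_subset)
  ultimately show "eval_trm (snd (A, snd B)) \<sigma> s = eval_trm (snd (A, snd B)) \<sigma> t"
    using in_varietyD[OF assms(1)] by simp
qed

lemma congruence_equiv: "congruence ar X \<theta> \<Longrightarrow> equiv (fst X) \<theta>"
  unfolding congruence_def by blast

lemma congruence_refl: "congruence ar X \<theta> \<Longrightarrow> x \<in> fst X \<Longrightarrow> (x, x) \<in> \<theta>"
  unfolding congruence_def equiv_def refl_on_def by blast

lemma congruence_sym: "congruence ar X \<theta> \<Longrightarrow> (x, y) \<in> \<theta> \<Longrightarrow> (y, x) \<in> \<theta>"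
  unfolding congruence_def equiv_def sym_def by blast

lemma congruence_trans: "congruence ar X \<theta> \<Longrightarrow> (x, y) \<in> \<theta> \<Longrightarrow> (y, z) \<in> \<theta> \<Longrightarrow> (x, z) \<in> \<theta>"
  unfolding congruence_def equiv_def trans_def by blast

lemma congruence_subset: "congruence ar X \<theta> \<Longrightarrow> \<theta> \<subseteq> fst X \<times> fst X"
  unfolding congruence_def equiv_def refl_on_def by blast

lemma congruence_app:
  "congruence ar X \<theta> \<Longrightarrow> length xs = ar f \<Longrightarrow> list_all2 (\<lambda>x y. (x, y) \<in> \<theta>) xs ys
   \<Longrightarrow> (snd X f xs, snd X f ys) \<in> \<theta>"
  unfolding congruence_def by blast

lemma congruenceI:
  assumes "equiv (fst X) \<theta>"
    and "\<And>f xs ys. length xs = ar f \<Longrightarrow> list_all2 (\<lambda>x y. (x, y) \<in> \<theta>) xs ys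
           \<Longrightarrow> set xs \<subseteq> fst X \<Longrightarrow> set ys \<subseteq> fst X \<Longrightarrow> (snd X f xs, snd X f ys) \<in> \<theta>"
  shows "congruence ar X \<theta>"
  unfolding congruence_def
proof (intro conjI allI impI)
  fix f xs ys
  assume len_rel: "length xs = ar f \<and> list_all2 (\<lambda>x y. (x, y) \<in> \<theta>) xs ys"
  then have "set xs \<subseteq> fst X \<and> set ys \<subseteq> fst X"
    using list_all2_set_subset equiv_type[OF assms(1)] by blast
  with len_rel show "(snd X f xs, snd X f ys) \<in> \<theta>"
    using assms(2) by blast
qed (fact assms(1))

lemma congruence_total:
  assumes "is_algebra ar X"
  shows "congruence ar X (fst X \<times> fst X)"
proof (rule congruenceI)
  show "equiv (fst X) (fst X \<times> fst X)"
    by (rule equivI) (auto simp: refl_on_def sym_def trans_def)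
  fix f xs ys
  assume "length xs = ar f" "list_all2 (\<lambda>x y. (x, y) \<in> fst X \<times> fst X) xs ys"
    and "set xs \<subseteq> fst X" "set ys \<subseteq> fst X"
  then show "(snd X f xs, snd X f ys) \<in> fst X \<times> fst X"
    using is_algebra_closed[OF assms] list_all2_lengthD[of _ xs ys] by simp
qed

lemma congruence_Inter:
  assumes "F \<noteq> {}" and cong: "\<And>\<theta>. \<theta> \<in> F \<Longrightarrow> congruence ar X \<theta>"
  shows "congruence ar X (\<Inter>F)"
proof (rule congruenceI)
  show "equiv (fst X) (\<Inter>F)"
  proof (rule equivI)
    obtain \<theta> where "\<theta> \<in> F"
      using assms(1) by blast
    then show "\<Inter>F \<subseteq> fst X \<times> fst X"
      using congruence_subset[OF cong] by blast
    show "refl_on (fst X) (\<Inter>F)"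
      using congruence_refl[OF cong] unfolding refl_on_def by blast
    show "sym (\<Inter>F)"
      using congruence_sym[OF cong] unfolding sym_def by blast
    show "trans (\<Inter>F)"
      using congruence_trans[OF cong] unfolding trans_def by blast
  qed
  fix f xs ys
  assume len: "length xs = ar f" and rel: "list_all2 (\<lambda>x y. (x, y) \<in> \<Inter>F) xs ys"
  show "(snd X f xs, snd X f ys) \<in> \<Inter>F"
  proof
    fix \<theta> assume "\<theta> \<in> F"
    then have "list_all2 (\<lambda>x y. (x, y) \<in> \<theta>) xs ys"
      using rel by (auto elim: list_all2_mono)
    then show "(snd X f xs, snd X f ys) \<in> \<theta>"
      using congruence_app[OF cong[OF \<open>\<theta> \<in> F\<close>] len] by blast
  qed
qed

lemma congruence_cong_join:
  assumes "is_algebra ar X" and "\<theta>1 \<union> \<theta>2 \<subseteq> fst X \<times> fst X"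
  shows "congruence ar X (cong_join ar X \<theta>1 \<theta>2)"
  unfolding cong_join_def
proof (rule congruence_Inter)
  show "{\<psi>. congruence ar X \<psi> \<and> \<theta>1 \<union> \<theta>2 \<subseteq> \<psi>} \<noteq> {}"
    using assms congruence_total by blast
qed blast

lemma cong_join_upper: "\<theta>1 \<union> \<theta>2 \<subseteq> cong_join ar X \<theta>1 \<theta>2"
  unfolding cong_join_def by blast

lemma cong_join_least:
  "congruence ar X \<psi> \<Longrightarrow> \<theta>1 \<union> \<theta>2 \<subseteq> \<psi> \<Longrightarrow> cong_join ar X \<theta>1 \<theta>2 \<subseteq> \<psi>"
  unfolding cong_join_def by blast

lemma cong_join_commute: "cong_join ar X \<theta>1 \<theta>2 = cong_join ar X \<theta>2 \<theta>1"
  unfolding cong_join_def by (simp add: Un_commute)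

lemma cong_join_Id_on:
  assumes "congruence ar X \<theta>"
  shows "cong_join ar X (Id_on (fst X)) \<theta> = \<theta>"
proof -
  have "Id_on (fst X) \<union> \<theta> \<subseteq> \<theta>"
    using congruence_refl[OF assms] by blast
  then have "cong_join ar X (Id_on (fst X)) \<theta> \<subseteq> \<theta>"
    by (rule cong_join_least[OF assms])
  moreover have "\<theta> \<subseteq> cong_join ar X (Id_on (fst X)) \<theta>"
    using cong_join_upper by blast
  ultimately show ?thesis
    by (rule subset_antisym)
qed

lemma congruence_restr:
  assumes cong: "congruence ar B \<theta>" and sub: "is_subalgebra ar A B"
  shows "congruence ar (A, snd B) (restr \<theta> A)"
proof (rule congruenceI)
  have "A \<subseteq> fst B"
    using sub by (rule is_subalgebra_subset)
  then have "equiv A (restr \<theta> A)"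
    using congruence_refl[OF cong] congruence_sym[OF cong] congruence_trans[OF cong]
    unfolding restr_def by (intro equivI) (unfold refl_on_def sym_def trans_def, blast+)
  then show "equiv (fst (A, snd B)) (restr \<theta> A)"
    by simp
  fix f xs ys
  assume len: "length xs = ar f" and rel: "list_all2 (\<lambda>x y. (x, y) \<in> restr \<theta> A) xs ys"
    and xs: "set xs \<subseteq> fst (A, snd B)" and ys: "set ys \<subseteq> fst (A, snd B)"
  have "list_all2 (\<lambda>x y. (x, y) \<in> \<theta>) xs ys"
    using rel by (rule list_all2_mono) (simp add: restr_def)
  then have "(snd B f xs, snd B f ys) \<in> \<theta>"
    by (rule congruence_app[OF cong len])
  moreover have "snd B f xs \<in> A" and "snd B f ys \<in> A"
    using is_algebra_closed[OF is_subalgebra_is_algebra[OF sub]] len xs ys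
      list_all2_lengthD[OF rel] by simp_all
  ultimately show "(snd (A, snd B) f xs, snd (A, snd B) f ys) \<in> restr \<theta> A"
    by (simp add: restr_def)
qed

lemma cong_join_restr_subset:
  assumes "is_algebra ar B" and "is_subalgebra ar A B"
    and "congruence ar B \<theta>1" and "congruence ar B \<theta>2"
  shows "cong_join ar (A, snd B) (restr \<theta>1 A) (restr \<theta>2 A) \<subseteq> restr (cong_join ar B \<theta>1 \<theta>2) A"
proof (rule cong_join_least)
  have "\<theta>1 \<union> \<theta>2 \<subseteq> fst B \<times> fst B"
    using congruence_subset assms(3,4) by blast
  then show "congruence ar (A, snd B) (restr (cong_join ar B \<theta>1 \<theta>2) A)"
    using assms(1,2) by (intro congruence_restr congruence_cong_join)
  show "restr \<theta>1 A \<union> restr \<theta>2 A \<subseteq> restr (cong_join ar B \<theta>1 \<theta>2) A"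
    using cong_join_upper unfolding restr_def by blast
qed

definition kernel :: "('f, 'a) alg \<Rightarrow> ('a \<Rightarrow> 'c) \<Rightarrow> 'a rel" where
  "kernel X g = {(x, y). x \<in> fst X \<and> y \<in> fst X \<and> g x = g y}"

lemma congruence_kernel:
  assumes hom: "is_hom ar g B C" and alg: "is_algebra ar B"
  shows "congruence ar B (kernel B g)"
proof (rule congruenceI)
  show "equiv (fst B) (kernel B g)"
    by (rule equivI) (auto simp: kernel_def refl_on_def sym_def trans_def)
  fix f xs ys
  assume len: "length xs = ar f" and rel: "list_all2 (\<lambda>x y. (x, y) \<in> kernel B g) xs ys"
    and xs: "set xs \<subseteq> fst B" and ys: "set ys \<subseteq> fst B"
  have len': "length ys = ar f"
    using len list_all2_lengthD[OF rel] by simp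
  have "list_all2 (=) (map g xs) (map g ys)"
    unfolding list_all2_map1 list_all2_map2 using rel by (rule list_all2_mono) (simp add: kernel_def)
  then have "g (snd B f xs) = g (snd B f ys)"
    using hom len len' xs ys unfolding is_hom_def list_all2_eq[symmetric] by metis
  then show "(snd B f xs, snd B f ys) \<in> kernel B g"
    using is_algebra_closed[OF alg] len len' xs ys by (simp add: kernel_def)
qed

lemma eval_trm_closed:
  assumes "is_algebra ar X" and "range \<tau> \<subseteq> fst X"
  shows "wf_trm ar t \<Longrightarrow> eval_trm (snd X) \<tau> t \<in> fst X"
proof (induction t)
  case (App f ts)
  then have "set (map (eval_trm (snd X) \<tau>) ts) \<subseteq> fst X"
    by auto
  with App.prems show ?case
    using is_algebra_closed[OF assms(1)] by simp
qed (use assms(2) in auto)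

lemma hom_eval_trm:
  assumes hom: "is_hom ar h X Y" and alg: "is_algebra ar X" and \<tau>: "range \<tau> \<subseteq> fst X"
  shows "wf_trm ar t \<Longrightarrow> h (eval_trm (snd X) \<tau> t) = eval_trm (snd Y) (h \<circ> \<tau>) t"
proof (induction t)
  case (App f ts)
  then have "length ts = ar f" and "set (map (eval_trm (snd X) \<tau>) ts) \<subseteq> fst X"
    using eval_trm_closed[OF alg \<tau>] by auto
  then have "h (eval_trm (snd X) \<tau> (App f ts)) = snd Y f (map (h \<circ> eval_trm (snd X) \<tau>) ts)"
    using hom unfolding is_hom_def by simp
  also have "\<dots> = eval_trm (snd Y) (h \<circ> \<tau>) (App f ts)"
    using App by (simp add: comp_def cong: map_cong)
  finally show ?case .
qed simp

lemma in_variety_hom_image: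
  assumes var: "in_variety ar Eqs X" and alg: "is_algebra ar Y"
    and hom: "is_hom ar h X Y" and onto: "h ` fst X = fst Y"
  shows "in_variety ar Eqs Y"
proof (rule in_varietyI[OF alg])
  fix s t and \<sigma> :: "nat \<Rightarrow> _"
  assume st: "(s, t) \<in> Eqs" and wf: "wf_trm ar s" "wf_trm ar t" and \<sigma>: "range \<sigma> \<subseteq> fst Y"
  define \<tau> where "\<tau> = inv_into (fst X) h \<circ> \<sigma>"
  have "\<sigma> v \<in> h ` fst X" for v
    using \<sigma> onto by blast
  then have \<tau>: "range \<tau> \<subseteq> fst X" and h_\<tau>: "h \<circ> \<tau> = \<sigma>"
    unfolding \<tau>_def by (auto intro: inv_into_into simp: f_inv_into_f)
  have "eval_trm (snd X) \<tau> s = eval_trm (snd X) \<tau> t"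
    by (rule in_varietyD[OF var st wf \<tau>])
  then show "eval_trm (snd Y) \<sigma> s = eval_trm (snd Y) \<sigma> t"
    using hom_eval_trm[OF hom in_variety_is_algebra[OF var] \<tau>] wf h_\<tau> by metis
qed

section \<open>Quotient algebras\<close>

definition rep :: "'a rel \<Rightarrow> 'a \<Rightarrow> 'a" where
  "rep \<phi> x = (SOME y. y \<in> \<phi> `` {x})"

lemma rep_related:
  assumes "equiv S \<phi>" and "x \<in> S"
  shows "(x, rep \<phi> x) \<in> \<phi>"
proof -
  have "x \<in> \<phi> `` {x}"
    using assms by (rule equiv_class_self)
  then have "rep \<phi> x \<in> \<phi> `` {x}"
    unfolding rep_def by (rule someI)
  then show ?thesis
    by simp
qed

lemma rep_eq: "equiv S \<phi> \<Longrightarrow> (x, y) \<in> \<phi> \<Longrightarrow> rep \<phi> x = rep \<phi> y"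
  unfolding rep_def by (simp add: equiv_class_eq)

lemma rep_eq_iff:
  assumes "equiv S \<phi>" and "x \<in> S" and "y \<in> S"
  shows "rep \<phi> x = rep \<phi> y \<longleftrightarrow> (x, y) \<in> \<phi>"
proof
  have "sym \<phi>" and "trans \<phi>"
    using assms(1) unfolding equiv_def by blast+
  moreover assume "rep \<phi> x = rep \<phi> y"
  ultimately show "(x, y) \<in> \<phi>"
    using rep_related[OF assms(1,2)] rep_related[OF assms(1,3)] by (metis symD transD)
qed (rule rep_eq[OF assms(1)])

lemma rep_in:
  assumes "equiv S \<phi>" and "x \<in> S"
  shows "rep \<phi> x \<in> S"
  using equiv_type[OF assms(1)] rep_related[OF assms] by blast

text \<open>
  The target algebras in epic_in live in the type of terms over 'a \<times> bool, so A/\<phi> is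
  realised there: the class of x is the variable named by the chosen representative
  rep \<phi> x, and quot_rep reads it back (its value on App is junk, never met on the carrier).
\<close>

definition quot_map :: "'a rel \<Rightarrow> 'a \<Rightarrow> ('f, 'a \<times> bool) trm" where
  "quot_map \<phi> x = Var (rep \<phi> x, True)"

fun quot_rep :: "('f, 'a \<times> bool) trm \<Rightarrow> 'a" where
  "quot_rep (Var v) = fst v"
| "quot_rep (App f ts) = undefined"

definition quotient_alg :: "('f, 'a) alg \<Rightarrow> 'a rel \<Rightarrow> ('f, ('f, 'a \<times> bool) trm) alg" where
  "quotient_alg X \<phi> = (quot_map \<phi> ` fst X, \<lambda>f ts. quot_map \<phi> (snd X f (map quot_rep ts)))"

lemma quot_rep_quot_map [simp]: "quot_rep (quot_map \<phi> x) = rep \<phi> x"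
  by (simp add: quot_map_def)

lemma quot_map_eq_iff:
  "equiv S \<phi> \<Longrightarrow> x \<in> S \<Longrightarrow> y \<in> S \<Longrightarrow> quot_map \<phi> x = quot_map \<phi> y \<longleftrightarrow> (x, y) \<in> \<phi>"
  by (simp add: quot_map_def rep_eq_iff)

lemma quot_map_eq: "equiv S \<phi> \<Longrightarrow> (x, y) \<in> \<phi> \<Longrightarrow> quot_map \<phi> x = quot_map \<phi> y"
  by (simp add: quot_map_def rep_eq)

lemma is_hom_quot_map:
  assumes cong: "congruence ar X \<phi>"
  shows "is_hom ar (quot_map \<phi>) X (quotient_alg X \<phi>)"
  unfolding is_hom_def
proof (intro conjI allI impI)
  show "quot_map \<phi> ` fst X \<subseteq> fst (quotient_alg X \<phi>)"
    by (simp add: quotient_alg_def)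
  fix f xs
  assume "length xs = ar f \<and> set xs \<subseteq> fst X"
  then have len: "length xs = ar f" and xs: "set xs \<subseteq> fst X"
    by simp_all
  have "list_all2 (\<lambda>x y. (x, y) \<in> \<phi>) xs (map (rep \<phi>) xs)"
    unfolding list_all2_map2 list_all2_same
    using xs rep_related[OF congruence_equiv[OF cong]] by blast
  then have "(snd X f xs, snd X f (map (rep \<phi>) xs)) \<in> \<phi>"
    by (rule congruence_app[OF cong len])
  then show "quot_map \<phi> (snd X f xs) = snd (quotient_alg X \<phi>) f (map (quot_map \<phi>) xs)"
    using quot_map_eq[OF congruence_equiv[OF cong]] by (simp add: quotient_alg_def comp_def)
qed

lemma is_algebra_quotient_alg:
  assumes alg: "is_algebra ar X" and cong: "congruence ar X \<phi>"
  shows "is_algebra ar (quotient_alg X \<phi>)"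
  unfolding is_algebra_def
proof (intro conjI allI impI)
  show "fst (quotient_alg X \<phi>) \<noteq> {}"
    using alg by (simp add: is_algebra_def quotient_alg_def)
  fix f ts
  assume "length ts = ar f \<and> set ts \<subseteq> fst (quotient_alg X \<phi>)"
  moreover have "quot_rep t \<in> fst X" if "t \<in> fst (quotient_alg X \<phi>)" for t
    using that rep_in[OF congruence_equiv[OF cong]] by (auto simp: quotient_alg_def)
  ultimately have "set (map quot_rep ts) \<subseteq> fst X" and "length (map quot_rep ts) = ar f"
    by auto
  then have "snd X f (map quot_rep ts) \<in> fst X"
    by (rule is_algebra_closed[OF alg, rotated])
  then show "snd (quotient_alg X \<phi>) f ts \<in> fst (quotient_alg X \<phi>)"
    by (simp add: quotient_alg_def)
qed

lemma in_variety_quotient_alg: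
  assumes "in_variety ar Eqs X" and "congruence ar X \<phi>"
  shows "in_variety ar Eqs (quotient_alg X \<phi>)"
proof (rule in_variety_hom_image)
  show "is_algebra ar (quotient_alg X \<phi>)"
    using assms in_variety_is_algebra is_algebra_quotient_alg by blast
  show "is_hom ar (quot_map \<phi>) X (quotient_alg X \<phi>)"
    using assms(2) by (rule is_hom_quot_map)
qed (use assms(1) in \<open>simp_all add: quotient_alg_def\<close>)

section \<open>The homomorphisms induced by a congruence meeting every class in A\<close>

definition select_related :: "'a set \<Rightarrow> 'a rel \<Rightarrow> 'a \<Rightarrow> 'a" where
  "select_related A \<theta> b = (SOME a. a \<in> A \<and> (b, a) \<in> \<theta>)"

definition induced_quot_map :: "'a set \<Rightarrow> 'a rel \<Rightarrow> 'a rel \<Rightarrow> 'a \<Rightarrow> ('f, 'a \<times> bool) trm" where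
  "induced_quot_map A \<theta> \<phi> b = quot_map \<phi> (select_related A \<theta> b)"

context
  fixes ar :: "'f \<Rightarrow> nat" and B :: "('f, 'a) alg" and A :: "'a set" and \<theta> \<phi> :: "'a rel"
  assumes sub: "is_subalgebra ar A B"
    and \<theta>: "congruence ar B \<theta>"
    and \<phi>: "congruence ar (A, snd B) \<phi>"
    and restr_le: "restr \<theta> A \<subseteq> \<phi>"
    and meets: "\<forall>b\<in>fst B. \<exists>a\<in>A. (b, a) \<in> \<theta>"
begin

private lemma select_related:
  assumes "b \<in> fst B"
  shows "select_related A \<theta> b \<in> A" and "(b, select_related A \<theta> b) \<in> \<theta>"
proof -
  have "\<exists>a. a \<in> A \<and> (b, a) \<in> \<theta>"
    using meets assms by blast
  then have "select_related A \<theta> b \<in> A \<and> (b, select_related A \<theta> b) \<in> \<theta>"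
    unfolding select_related_def by (rule someI_ex)
  then show "select_related A \<theta> b \<in> A" and "(b, select_related A \<theta> b) \<in> \<theta>"
    by simp_all
qed

private lemma quot_map_eq_of_related:
  assumes "(x, y) \<in> \<theta>" and "x \<in> A" and "y \<in> A"
  shows "quot_map \<phi> x = quot_map \<phi> y"
proof -
  have "(x, y) \<in> \<phi>"
    using assms restr_le unfolding restr_def by blast
  then show ?thesis
    by (rule quot_map_eq[OF congruence_equiv[OF \<phi>]])
qed

lemma induced_quot_map_on_subalgebra:
  assumes "a \<in> A"
  shows "induced_quot_map A \<theta> \<phi> a = quot_map \<phi> a"
proof -
  have "a \<in> fst B"
    using assms is_subalgebra_subset[OF sub] by blast
  then have "(select_related A \<theta> a, a) \<in> \<theta>" and "select_related A \<theta> a \<in> A"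
    using congruence_sym[OF \<theta> select_related(2)] select_related(1) by blast+
  then show ?thesis
    unfolding induced_quot_map_def using assms by (rule quot_map_eq_of_related)
qed

lemma induced_quot_map_respects:
  assumes "(b, c) \<in> \<theta>"
  shows "induced_quot_map A \<theta> \<phi> b = induced_quot_map A \<theta> \<phi> c"
proof -
  have b: "b \<in> fst B" and c: "c \<in> fst B"
    using assms congruence_subset[OF \<theta>] by blast+
  have "(select_related A \<theta> b, b) \<in> \<theta>"
    using congruence_sym[OF \<theta> select_related(2)[OF b]] .
  then have "(select_related A \<theta> b, select_related A \<theta> c) \<in> \<theta>"
    using congruence_trans[OF \<theta>] assms select_related(2)[OF c] by blast
  then show ?thesis
    unfolding induced_quot_map_def
    using quot_map_eq_of_related select_related(1)[OF b] select_related(1)[OF c] by blast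
qed

lemma is_hom_induced_quot_map:
  "is_hom ar (induced_quot_map A \<theta> \<phi>) B (quotient_alg (A, snd B) \<phi>)"
  unfolding is_hom_def
proof (intro conjI allI impI)
  show "induced_quot_map A \<theta> \<phi> ` fst B \<subseteq> fst (quotient_alg (A, snd B) \<phi>)"
    using select_related(1) by (auto simp: induced_quot_map_def quotient_alg_def)
  fix f bs
  assume "length bs = ar f \<and> set bs \<subseteq> fst B"
  then have len: "length bs = ar f" and bs: "set bs \<subseteq> fst B"
    by simp_all
  let ?as = "map (select_related A \<theta>) bs"
  have as: "set ?as \<subseteq> A" and len_as: "length ?as = ar f"
    using select_related(1) bs len by auto
  have "list_all2 (\<lambda>x y. (x, y) \<in> \<theta>) bs ?as"
    unfolding list_all2_map2 list_all2_same using select_related(2) bs by blast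
  then have "induced_quot_map A \<theta> \<phi> (snd B f bs) = induced_quot_map A \<theta> \<phi> (snd B f ?as)"
    by (rule induced_quot_map_respects[OF congruence_app[OF \<theta> len]])
  also have "\<dots> = quot_map \<phi> (snd (A, snd B) f ?as)"
    using is_algebra_closed[OF is_subalgebra_is_algebra[OF sub] len_as] as
    by (simp add: induced_quot_map_on_subalgebra)
  also have "\<dots> = snd (quotient_alg (A, snd B) \<phi>) f (map (quot_map \<phi>) ?as)"
    using is_hom_quot_map[OF \<phi>] len_as as unfolding is_hom_def by simp
  also have "\<dots> = snd (quotient_alg (A, snd B) \<phi>) f (map (induced_quot_map A \<theta> \<phi>) bs)"
    by (simp add: induced_quot_map_def[abs_def] comp_def)
  finally show "induced_quot_map A \<theta> \<phi> (snd B f bs)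
      = snd (quotient_alg (A, snd B) \<phi>) f (map (induced_quot_map A \<theta> \<phi>) bs)" .
qed

lemma subset_kernel_induced_quot_map: "\<theta> \<subseteq> kernel B (induced_quot_map A \<theta> \<phi>)"
  using induced_quot_map_respects congruence_subset[OF \<theta>] unfolding kernel_def by blast

lemma restr_kernel_induced_quot_map:
  "restr (kernel B (induced_quot_map A \<theta> \<phi> :: 'a \<Rightarrow> ('f, 'a \<times> bool) trm)) A \<subseteq> \<phi>"
proof
  fix p
  assume "p \<in> restr (kernel B (induced_quot_map A \<theta> \<phi> :: 'a \<Rightarrow> ('f, 'a \<times> bool) trm)) A"
  then obtain x y where p: "p = (x, y)" and x: "x \<in> A" and y: "y \<in> A"
    and "(induced_quot_map A \<theta> \<phi> x :: ('f, 'a \<times> bool) trm) = induced_quot_map A \<theta> \<phi> y"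
    unfolding restr_def kernel_def by blast
  then have "(quot_map \<phi> x :: ('f, 'a \<times> bool) trm) = quot_map \<phi> y"
    by (simp add: induced_quot_map_on_subalgebra)
  moreover have "equiv A \<phi>"
    using congruence_equiv[OF \<phi>] by simp
  ultimately show "p \<in> \<phi>"
    using quot_map_eq_iff x y p by metis
qed

end

lemma restr_cong_join_subset_if_epic:
  fixes B :: "('f, 'a) alg"
  assumes var: "in_variety ar Eqs B" and sub: "is_subalgebra ar A B"
    and epic: "epic_in ar Eqs A B"
    and \<theta>1: "congruence ar B \<theta>1" and \<theta>2: "congruence ar B \<theta>2"
    and meets1: "\<forall>b\<in>fst B. \<exists>a\<in>A. (b, a) \<in> \<theta>1"
    and meets2: "\<forall>b\<in>fst B. \<exists>a\<in>A. (b, a) \<in> \<theta>2"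
  shows "restr (cong_join ar B \<theta>1 \<theta>2) A \<subseteq> cong_join ar (A, snd B) (restr \<theta>1 A) (restr \<theta>2 A)"
    (is "_ \<subseteq> ?\<phi>")
proof -
  have \<phi>: "congruence ar (A, snd B) ?\<phi>"
    using is_subalgebra_is_algebra[OF sub] by (rule congruence_cong_join) (auto simp: restr_def)
  have le1: "restr \<theta>1 A \<subseteq> ?\<phi>" and le2: "restr \<theta>2 A \<subseteq> ?\<phi>"
    using cong_join_upper by blast+
  note g1 = induced_quot_map_on_subalgebra[OF sub \<theta>1 \<phi> le1 meets1]
    is_hom_induced_quot_map[OF sub \<theta>1 \<phi> le1 meets1]
    subset_kernel_induced_quot_map[OF sub \<theta>1 \<phi> le1 meets1]
    restr_kernel_induced_quot_map[OF sub \<theta>1 \<phi> le1 meets1]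
  note g2 = induced_quot_map_on_subalgebra[OF sub \<theta>2 \<phi> le2 meets2]
    is_hom_induced_quot_map[OF sub \<theta>2 \<phi> le2 meets2]
    subset_kernel_induced_quot_map[OF sub \<theta>2 \<phi> le2 meets2]
  let ?g1 = "induced_quot_map A \<theta>1 ?\<phi> :: 'a \<Rightarrow> ('f, 'a \<times> bool) trm"
    and ?g2 = "induced_quot_map A \<theta>2 ?\<phi> :: 'a \<Rightarrow> ('f, 'a \<times> bool) trm"
  have "in_variety ar Eqs (quotient_alg (A, snd B) ?\<phi>)"
    using in_variety_subalgebra[OF var sub] \<phi> by (rule in_variety_quotient_alg)
  moreover have "\<forall>a\<in>A. ?g1 a = ?g2 a"
    by (simp add: g1(1) g2(1))
  ultimately have "\<forall>b\<in>fst B. ?g1 b = ?g2 b"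
    using epic g1(2) g2(2) unfolding epic_in_def by blast
  then have "kernel B ?g2 = kernel B ?g1"
    unfolding kernel_def by auto
  then have "\<theta>1 \<union> \<theta>2 \<subseteq> kernel B ?g1"
    using g1(3) g2(3) by blast
  then have "cong_join ar B \<theta>1 \<theta>2 \<subseteq> kernel B ?g1"
    by (rule cong_join_least[OF congruence_kernel[OF g1(2) in_variety_is_algebra[OF var]]])
  then show ?thesis
    using g1(4) unfolding restr_def by blast
qed

theorem mainTheorem15:
  fixes ar :: "'f \<Rightarrow> nat"
    and Eqs :: "(('f, nat) trm \<times> ('f, nat) trm) set"
    and B :: "('f, 'b) alg"
    and A :: "'b set"
    and \<theta>1 \<theta>2 :: "'b rel"
  assumes "in_variety ar Eqs B"
    and "is_subalgebra ar A B"
    and "fully_epic_in ar Eqs A B"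
    and "congruence ar B \<theta>1"
    and "congruence ar B \<theta>2"
  shows "restr (cong_join ar B \<theta>1 \<theta>2) A
           = cong_join ar (A, snd B) (restr \<theta>1 A) (restr \<theta>2 A)"
proof (rule subset_antisym)
  show "restr (cong_join ar B \<theta>1 \<theta>2) A \<subseteq> cong_join ar (A, snd B) (restr \<theta>1 A) (restr \<theta>2 A)"
  proof (cases "\<theta>1 = Id_on (fst B) \<or> \<theta>2 = Id_on (fst B)")
    case True
    then have "cong_join ar B \<theta>1 \<theta>2 = \<theta>2 \<or> cong_join ar B \<theta>1 \<theta>2 = \<theta>1"
      using cong_join_Id_on[OF assms(5)] cong_join_Id_on[OF assms(4)] cong_join_commute[of ar B]
      by auto
    then show ?thesis
      using cong_join_upper[of "restr \<theta>1 A" "restr \<theta>2 A" ar "(A, snd B)"] by auto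
  next
    case False
    have full: "full_in ar A B" and epic: "epic_in ar Eqs A B"
      using assms(3) unfolding fully_epic_in_def by blast+
    have "\<forall>b\<in>fst B. \<exists>a\<in>A. (b, a) \<in> \<theta>1" and "\<forall>b\<in>fst B. \<exists>a\<in>A. (b, a) \<in> \<theta>2"
      using full False assms(4,5) unfolding full_in_def by blast+
    then show ?thesis
      by (rule restr_cong_join_subset_if_epic[OF assms(1,2) epic assms(4,5)])
  qed
  show "cong_join ar (A, snd B) (restr \<theta>1 A) (restr \<theta>2 A) \<subseteq> restr (cong_join ar B \<theta>1 \<theta>2) A"
    using assms(2,4,5) in_variety_is_algebra[OF assms(1)] by (intro cong_join_restr_subset)
qed

end
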